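(* Let $n\ge 3$ and $a<b<c$ be elements of $\mathcal{C}_n$, and let $\triangle=\triangle^{(n)}\{a,b,c\}$. Define the following subsets of $\triangle$ (each described by the triple $(\alpha(a),\alpha(b),\alpha(c))$): $N^{[a]}=\{\alpha\in\triangle:\ \alpha^m=\overline{a}\text{ for some } m\ge1\}$ (equivalently $(\alpha(a),\alpha(b),\alpha(c))\in\{(a,a,a),(a,a,b)\}$); $N^{[b]}=\{\alpha\in\triangle:\ \alpha^m=\overline{b}\text{ for some } m\ge1\}$ (equivalently the triple is $(b,b,b)$); $N^{[c]}=\{\alpha\in\triangle:\ \alpha^m=\overline{c}\text{ for some } m\ge1\}$ (equivalently the triple is $(b,c,c)$ or $(c,c,c)$); $L_{par}=\{\alpha\in\triangle:\ \alpha(a)=a,\ \alpha(b)=\alpha(c)=b\}$; $R_{par}=\{\alpha\in\triangle:\ \alpha(a)=\alpha(b)=b,\ \alpha(c)=c\}$; $L_{\triangle}=\{\alpha\in\triangle:\ \alpha(a)=\alpha(b)=a,\ \alpha(c)=c\}$; $R_{\triangle}=\{\alpha\in\triangle:\ \alpha(a)=a,\ \alpha(b)=\alpha(c)=c\}$; $\mathcal{RI}$ = the set of right identities of $\triangle$. Then each of these eight sets is a subsemiring of $\triangle$, and $\triangle$ is the disjoint union of these eight sets.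
   Context: $\mathcal{C}_n=\{0,1,\dots,n-1\}$ is the chain with its usual order, a join-semilattice with $x\vee y=\max(x,y)$. $\widehat{\mathcal{E}}_{\mathcal{C}_n}$ is the set of all order-preserving maps $\alpha:\mathcal{C}_n\to\mathcal{C}_n$ (not required to fix $0$), a semiring with $(\alpha+\beta)(x)=\max(\alpha(x),\beta(x))$ and $(\alpha\cdot\beta)(x)=\beta(\alpha(x))$ ("first $\alpha$, then $\beta$"); powers $\alpha^m$ are taken with respect to this product. $\overline{x}$ is the constant map with value $x$. The triangle $\triangle^{(n)}\{a,b,c\}$ is the subsemiring of all $\alpha\in\widehat{\mathcal{E}}_{\mathcal{C}_n}$ with image contained in $\{a,b,c\}$. A right identity of $\triangle$ is $e\in\triangle$ with $\alpha\cdot e=\alpha$ for all $\alpha\in\triangle$ (these are exactly the $\alpha\in\triangle$ with $\alpha(a)=a,\alpha(b)=b,\alpha(c)=c$). A subsemiring is a nonempty subset closed under $+$ and $\cdot$. *)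

theory Defs
  imports Main
begin

text \<open>The chain C_n is {0..<n} (as nat). Maps C_n -> C_n are represented as
  functions nat => nat that are extensional: value 0 outside {0..<n}.\<close>

definition endo :: "nat \<Rightarrow> (nat \<Rightarrow> nat) set" where
  "endo n = {\<alpha>. (\<forall>x<n. \<alpha> x < n) \<and> (\<forall>x y. x \<le> y \<and> y < n \<longrightarrow> \<alpha> x \<le> \<alpha> y)
              \<and> (\<forall>x. n \<le> x \<longrightarrow> \<alpha> x = 0)}"

definition eadd :: "nat \<Rightarrow> (nat \<Rightarrow> nat) \<Rightarrow> (nat \<Rightarrow> nat) \<Rightarrow> (nat \<Rightarrow> nat)" where
  "eadd n \<alpha> \<beta> = (\<lambda>x. if x < n then max (\<alpha> x) (\<beta> x) else 0)"

definition emult :: "nat \<Rightarrow> (nat \<Rightarrow> nat) \<Rightarrow> (nat \<Rightarrow> nat) \<Rightarrow> (nat \<Rightarrow> nat)" where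
  "emult n \<alpha> \<beta> = (\<lambda>x. if x < n then \<beta> (\<alpha> x) else 0)"

text \<open>epow n alpha m is alpha^(m+1).\<close>
fun epow :: "nat \<Rightarrow> (nat \<Rightarrow> nat) \<Rightarrow> nat \<Rightarrow> (nat \<Rightarrow> nat)" where
  "epow n \<alpha> 0 = \<alpha>"
| "epow n \<alpha> (Suc m) = emult n (epow n \<alpha> m) \<alpha>"

definition const_map :: "nat \<Rightarrow> nat \<Rightarrow> (nat \<Rightarrow> nat)" where
  "const_map n c = (\<lambda>x. if x < n then c else 0)"

definition triangle :: "nat \<Rightarrow> nat \<Rightarrow> nat \<Rightarrow> nat \<Rightarrow> (nat \<Rightarrow> nat) set" where
  "triangle n a b c = {\<alpha> \<in> endo n. \<forall>x<n. \<alpha> x \<in> {a, b, c}}"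

definition is_subsemiring :: "nat \<Rightarrow> (nat \<Rightarrow> nat) set \<Rightarrow> bool" where
  "is_subsemiring n S \<longleftrightarrow> S \<noteq> {} \<and> (\<forall>\<alpha>\<in>S. \<forall>\<beta>\<in>S. eadd n \<alpha> \<beta> \<in> S \<and> emult n \<alpha> \<beta> \<in> S)"

definition nilset :: "nat \<Rightarrow> (nat \<Rightarrow> nat) set \<Rightarrow> nat \<Rightarrow> (nat \<Rightarrow> nat) set" where
  "nilset n T x = {\<alpha> \<in> T. \<exists>m. epow n \<alpha> m = const_map n x}"

definition right_identities :: "nat \<Rightarrow> (nat \<Rightarrow> nat) set \<Rightarrow> (nat \<Rightarrow> nat) set" where
  "right_identities n T = {e \<in> T. \<forall>\<alpha>\<in>T. emult n \<alpha> e = \<alpha>}"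

end

theory Submission
  imports Defs
begin

text \<open>An element of the triangle is determined by its profile \<open>(\<alpha> a, \<alpha> b, \<alpha> c)\<close>, a monotone
  triple over \<open>{a, b, c}\<close>; sum and product act on profiles by componentwise maximum and by
  composition. Each of the eight sets is the preimage of a set of triples closed under these
  two operations, and the eight sets of triples partition the ten monotone triples. For the
  nilpotent classes, \<open>\<alpha>\<^sup>m\<close> is the constant \<open>x\<close> exactly when \<open>x\<close> is the only fixed point of \<open>\<alpha>\<close>
  in \<open>{a, b, c}\<close>: a fixed point survives every power, and on a three-element chain two
  further applications of \<open>\<alpha>\<close> already reach the unique fixed point.\<close>

lemma triangleI:
  assumes "\<And>x. x < n \<Longrightarrow> \<alpha> x \<in> {a, b, c}" "\<And>x. x < n \<Longrightarrow> \<alpha> x < n"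
    and "\<And>x y. x \<le> y \<Longrightarrow> y < n \<Longrightarrow> \<alpha> x \<le> \<alpha> y" "\<And>x. n \<le> x \<Longrightarrow> \<alpha> x = 0"
  shows "\<alpha> \<in> triangle n a b c"
  using assms by (auto simp: triangle_def endo_def)

lemma
  assumes "\<alpha> \<in> triangle n a b c"
  shows triangle_value: "x < n \<Longrightarrow> \<alpha> x \<in> {a, b, c}"
    and triangle_bound: "x < n \<Longrightarrow> \<alpha> x < n"
    and triangle_mono: "x \<le> y \<Longrightarrow> y < n \<Longrightarrow> \<alpha> x \<le> \<alpha> y"
    and triangle_outside: "n \<le> x \<Longrightarrow> \<alpha> x = 0"
  using assms by (auto simp: triangle_def endo_def)

lemma eadd_in_triangle:
  assumes "\<alpha> \<in> triangle n a b c" "\<beta> \<in> triangle n a b c"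
  shows "eadd n \<alpha> \<beta> \<in> triangle n a b c"
proof (rule triangleI)
  fix x y :: nat
  assume "x \<le> y" "y < n"
  then show "eadd n \<alpha> \<beta> x \<le> eadd n \<alpha> \<beta> y"
    using triangle_mono[OF assms(1), of x y] triangle_mono[OF assms(2), of x y]
    by (auto simp: eadd_def intro: max.mono)
qed (use triangle_value[OF assms(1)] triangle_value[OF assms(2)]
       triangle_bound[OF assms(1)] triangle_bound[OF assms(2)] in \<open>auto simp: eadd_def max_def\<close>)

lemma emult_in_triangle:
  assumes "\<alpha> \<in> triangle n a b c" "\<beta> \<in> triangle n a b c"
  shows "emult n \<alpha> \<beta> \<in> triangle n a b c"
  using triangle_value[OF assms(2)] triangle_bound[OF assms(1)] triangle_bound[OF assms(2)]
    triangle_mono[OF assms(1)] triangle_mono[OF assms(2)]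
  by (intro triangleI) (auto simp: emult_def)

lemma const_map_in_triangle:
  "y \<in> {a, b, c} \<Longrightarrow> y < n \<Longrightarrow> const_map n y \<in> triangle n a b c"
  by (intro triangleI) (auto simp: const_map_def)

lemma epow_Suc_apply: "x < n \<Longrightarrow> epow n \<alpha> (Suc m) x = \<alpha> (epow n \<alpha> m x)"
  by (simp add: emult_def)

lemma epow_Suc_apply_shift: "x < n \<Longrightarrow> \<alpha> \<in> triangle n a b c \<Longrightarrow> epow n \<alpha> (Suc m) x = epow n \<alpha> m (\<alpha> x)"
  by (induction m) (auto simp: emult_def triangle_bound)

lemma epow_fixpoint: "\<alpha> y = y \<Longrightarrow> y < n \<Longrightarrow> epow n \<alpha> m y = y"
  by (induction m) (auto simp: emult_def)

lemma epow_outside: "\<alpha> \<in> triangle n a b c \<Longrightarrow> n \<le> x \<Longrightarrow> epow n \<alpha> m x = 0"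
  by (cases m) (auto simp: emult_def triangle_outside)

lemma epow_eq_const_fixpoint:
  assumes "epow n \<alpha> m = const_map n x" "\<alpha> \<in> triangle n a b c" "x < n"
  shows "\<alpha> x = x"
proof -
  have "\<alpha> x = \<alpha> (epow n \<alpha> m x)"
    using assms by (simp add: const_map_def)
  also have "\<dots> = epow n \<alpha> (Suc m) x"
    using assms(3) by (rule epow_Suc_apply[symmetric])
  also have "\<dots> = epow n \<alpha> m (\<alpha> x)"
    using assms(3,2) by (rule epow_Suc_apply_shift)
  also have "\<dots> = x"
    using assms triangle_bound[OF assms(2)] by (simp add: const_map_def)
  finally show ?thesis .
qed

lemma epow_eq_const_unique_fixpoint:
  assumes "epow n \<alpha> m = const_map n x" "\<alpha> y = y" "y < n"
  shows "y = x"
  using epow_fixpoint[of \<alpha> y n m] assms by (simp add: const_map_def)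

lemma epow_2_eq_const:
  assumes "\<alpha> \<in> triangle n a b c" "\<And>y. y \<in> {a, b, c} \<Longrightarrow> \<alpha> (\<alpha> y) = z"
  shows "epow n \<alpha> 2 = const_map n z"
proof
  fix x
  show "epow n \<alpha> 2 x = const_map n z x"
  proof (cases "x < n")
    case True
    then have "epow n \<alpha> 2 x = \<alpha> (\<alpha> (\<alpha> x))"
      by (simp add: numeral_2_eq_2 emult_def)
    with True show ?thesis
      using assms(2) triangle_value[OF assms(1) True] by (simp add: const_map_def)
  next
    case False
    then show ?thesis using epow_outside[OF assms(1)] by (simp add: const_map_def)
  qed
qed

definition profile :: "nat \<Rightarrow> nat \<Rightarrow> nat \<Rightarrow> (nat \<Rightarrow> nat) \<Rightarrow> nat \<times> nat \<times> nat" where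
  "profile a b c \<alpha> = (\<alpha> a, \<alpha> b, \<alpha> c)"

definition monotone_triples :: "nat \<Rightarrow> nat \<Rightarrow> nat \<Rightarrow> (nat \<times> nat \<times> nat) set" where
  "monotone_triples a b c = {(p, q, r). p \<in> {a, b, c} \<and> q \<in> {a, b, c} \<and> r \<in> {a, b, c} \<and> p \<le> q \<and> q \<le> r}"

definition triple_apply :: "nat \<Rightarrow> nat \<Rightarrow> nat \<times> nat \<times> nat \<Rightarrow> nat \<Rightarrow> nat" where
  "triple_apply a b t y = (case t of (p, q, r) \<Rightarrow> if y = a then p else if y = b then q else r)"

definition triple_max :: "nat \<times> nat \<times> nat \<Rightarrow> nat \<times> nat \<times> nat \<Rightarrow> nat \<times> nat \<times> nat" where
  "triple_max t s = (case (t, s) of ((p, q, r), (p', q', r')) \<Rightarrow> (max p p', max q q', max r r'))"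

definition triple_comp :: "nat \<Rightarrow> nat \<Rightarrow> nat \<times> nat \<times> nat \<Rightarrow> nat \<times> nat \<times> nat \<Rightarrow> nat \<times> nat \<times> nat" where
  "triple_comp a b t s =
     (case t of (p, q, r) \<Rightarrow> (triple_apply a b s p, triple_apply a b s q, triple_apply a b s r))"

definition profile_class :: "nat \<Rightarrow> nat \<Rightarrow> nat \<Rightarrow> nat \<Rightarrow> (nat \<times> nat \<times> nat) set \<Rightarrow> (nat \<Rightarrow> nat) set" where
  "profile_class n a b c P = {\<alpha> \<in> triangle n a b c. profile a b c \<alpha> \<in> P}"

context
  fixes n a b c :: nat
  assumes abc: "a < b" "b < c" "c < n"
begin

lemma profile_in_monotone_triples:
  "\<alpha> \<in> triangle n a b c \<Longrightarrow> profile a b c \<alpha> \<in> monotone_triples a b c"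
  using abc triangle_value[of \<alpha> n a b c] triangle_mono[of \<alpha> n a b c]
  by (simp add: profile_def monotone_triples_def)

lemma triple_apply_profile: "y \<in> {a, b, c} \<Longrightarrow> triple_apply a b (profile a b c \<alpha>) y = \<alpha> y"
  using abc by (auto simp: triple_apply_def profile_def)

lemma profile_eadd: "profile a b c (eadd n \<alpha> \<beta>) = triple_max (profile a b c \<alpha>) (profile a b c \<beta>)"
  using abc by (simp add: profile_def eadd_def triple_max_def)

lemma profile_emult:
  assumes "\<alpha> \<in> triangle n a b c"
  shows "profile a b c (emult n \<alpha> \<beta>) = triple_comp a b (profile a b c \<alpha>) (profile a b c \<beta>)"
proof -
  have "triple_apply a b (profile a b c \<beta>) (\<alpha> y) = \<beta> (\<alpha> y)" if "y < n" for y
    using triangle_value[OF assms that] by (rule triple_apply_profile)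
  with abc show ?thesis
    unfolding profile_def[of a b c \<alpha>] profile_def[of a b c "emult n \<alpha> \<beta>"]
    by (simp add: emult_def triple_comp_def)
qed

lemma monotone_triples_eq:
  "monotone_triples a b c = {(a, a, a), (a, a, b), (a, a, c), (a, b, b), (a, b, c), (a, c, c),
    (b, b, b), (b, b, c), (b, c, c), (c, c, c)}"
proof (intro set_eqI iffI)
  fix t assume "t \<in> monotone_triples a b c"
  then obtain p q r where "t = (p, q, r)" "p \<in> {a, b, c}" "q \<in> {a, b, c}" "r \<in> {a, b, c}" "p \<le> q" "q \<le> r"
    by (auto simp: monotone_triples_def)
  then show "t \<in> {(a, a, a), (a, a, b), (a, a, c), (a, b, b), (a, b, c), (a, c, c),
    (b, b, b), (b, b, c), (b, c, c), (c, c, c)}"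
    using abc by (elim insertE emptyE) simp_all
qed (use abc in \<open>auto simp: monotone_triples_def\<close>)

lemma monotone_triple_realised:
  assumes "t \<in> monotone_triples a b c"
  obtains \<alpha> where "\<alpha> \<in> triangle n a b c" "profile a b c \<alpha> = t"
proof -
  obtain p q r where t: "t = (p, q, r)" and pqr: "p \<in> {a, b, c}" "q \<in> {a, b, c}" "r \<in> {a, b, c}"
    "p \<le> q" "q \<le> r"
    using assms by (auto simp: monotone_triples_def)
  define \<alpha> where "\<alpha> x = (if n \<le> x then 0 else if x \<le> a then p else if x \<le> b then q else r)" for x
  have "\<alpha> \<in> triangle n a b c"
  proof (rule triangleI)
    fix x y :: nat
    assume "x \<le> y" "y < n"
    then show "\<alpha> x \<le> \<alpha> y" using pqr(4,5) by (simp add: \<alpha>_def)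
  qed (use abc pqr in \<open>auto simp: \<alpha>_def\<close>)
  moreover have "profile a b c \<alpha> = t"
    using abc by (simp add: \<alpha>_def profile_def t)
  ultimately show thesis by (rule that)
qed

lemma profile_class_subsemiring:
  assumes "P \<subseteq> monotone_triples a b c" "P \<noteq> {}"
    and closed: "\<And>t s. t \<in> P \<Longrightarrow> s \<in> P \<Longrightarrow> triple_max t s \<in> P \<and> triple_comp a b t s \<in> P"
  shows "is_subsemiring n (profile_class n a b c P)"
proof -
  obtain t where "t \<in> P" using assms(2) by blast
  with assms(1) obtain \<alpha> where "\<alpha> \<in> triangle n a b c" "profile a b c \<alpha> = t"
    using monotone_triple_realised by blast
  with \<open>t \<in> P\<close> have "profile_class n a b c P \<noteq> {}"
    by (auto simp: profile_class_def)
  moreover have "eadd n \<alpha> \<beta> \<in> profile_class n a b c P" "emult n \<alpha> \<beta> \<in> profile_class n a b c P"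
    if "\<alpha> \<in> profile_class n a b c P" "\<beta> \<in> profile_class n a b c P" for \<alpha> \<beta>
    using that closed eadd_in_triangle emult_in_triangle
    by (simp_all add: profile_class_def profile_eadd profile_emult)
  ultimately show ?thesis
    by (simp add: is_subsemiring_def)
qed

lemma profile_classes_partition:
  assumes "\<Union>(set Ps) = monotone_triples a b c"
    and "\<forall>i<length Ps. \<forall>j<length Ps. i \<noteq> j \<longrightarrow> Ps ! i \<inter> Ps ! j = {}"
  shows "\<Union>(set (map (profile_class n a b c) Ps)) = triangle n a b c"
    and "\<forall>i<length Ps. \<forall>j<length Ps. i \<noteq> j \<longrightarrow>
           profile_class n a b c (Ps ! i) \<inter> profile_class n a b c (Ps ! j) = {}"
proof -
  show "\<Union>(set (map (profile_class n a b c) Ps)) = triangle n a b c"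
    using assms(1) profile_in_monotone_triples by (auto simp: profile_class_def)
  show "\<forall>i<length Ps. \<forall>j<length Ps. i \<noteq> j \<longrightarrow>
          profile_class n a b c (Ps ! i) \<inter> profile_class n a b c (Ps ! j) = {}"
    using assms(2) unfolding profile_class_def by blast
qed

lemma unique_fixpoint_reached_in_two_steps:
  assumes "\<alpha> \<in> triangle n a b c" "\<forall>y\<in>{a, b, c}. \<alpha> y = y \<longleftrightarrow> y = x" "y \<in> {a, b, c}"
  shows "\<alpha> (\<alpha> y) = x"
proof -
  have "(\<alpha> a, \<alpha> b, \<alpha> c) \<in> {(a, a, a), (a, a, b), (a, a, c), (a, b, b), (a, b, c), (a, c, c),
      (b, b, b), (b, b, c), (b, c, c), (c, c, c)}"
    using profile_in_monotone_triples[OF assms(1)] unfolding monotone_triples_eq profile_def .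
  then show ?thesis
    using assms(2,3) abc by (elim insertE emptyE) auto
qed

lemma nilset_eq_unique_fixpoint:
  assumes "x \<in> {a, b, c}"
  shows "nilset n (triangle n a b c) x
           = {\<alpha> \<in> triangle n a b c. \<forall>y\<in>{a, b, c}. \<alpha> y = y \<longleftrightarrow> y = x}"
proof (intro set_eqI iffI)
  fix \<alpha>
  assume "\<alpha> \<in> nilset n (triangle n a b c) x"
  then obtain m where \<alpha>: "\<alpha> \<in> triangle n a b c" and m: "epow n \<alpha> m = const_map n x"
    by (auto simp: nilset_def)
  have below_n: "y < n" if "y \<in> {a, b, c}" for y
    using that abc by auto
  have "\<alpha> x = x"
    using epow_eq_const_fixpoint[OF m \<alpha> below_n[OF assms]] .
  moreover have "y = x" if "y \<in> {a, b, c}" "\<alpha> y = y" for y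
    using epow_eq_const_unique_fixpoint[OF m that(2) below_n[OF that(1)]] .
  ultimately show "\<alpha> \<in> {\<alpha> \<in> triangle n a b c. \<forall>y\<in>{a, b, c}. \<alpha> y = y \<longleftrightarrow> y = x}"
    using \<alpha> by blast
next
  fix \<alpha>
  assume "\<alpha> \<in> {\<alpha> \<in> triangle n a b c. \<forall>y\<in>{a, b, c}. \<alpha> y = y \<longleftrightarrow> y = x}"
  then have \<alpha>: "\<alpha> \<in> triangle n a b c" and fixed: "\<forall>y\<in>{a, b, c}. \<alpha> y = y \<longleftrightarrow> y = x"
    by auto
  have "\<alpha> (\<alpha> y) = x" if "y \<in> {a, b, c}" for y
    using \<alpha> fixed that by (rule unique_fixpoint_reached_in_two_steps)
  then have "epow n \<alpha> 2 = const_map n x"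
    by (rule epow_2_eq_const[OF \<alpha>])
  with \<alpha> show "\<alpha> \<in> nilset n (triangle n a b c) x"
    unfolding nilset_def by blast
qed

lemma nilset_eq_profile_class:
  assumes "x \<in> {a, b, c}"
    and "\<And>t. t \<in> monotone_triples a b c \<Longrightarrow>
           t \<in> P \<longleftrightarrow> (\<forall>y\<in>{a, b, c}. triple_apply a b t y = y \<longleftrightarrow> y = x)"
  shows "nilset n (triangle n a b c) x = profile_class n a b c P"
  using assms(2)[OF profile_in_monotone_triples]
  by (auto simp: nilset_eq_unique_fixpoint[OF assms(1)] profile_class_def triple_apply_profile)

lemma right_identities_eq_profile_class:
  "right_identities n (triangle n a b c) = profile_class n a b c {(a, b, c)}"
proof (intro set_eqI iffI)
  fix e
  assume "e \<in> right_identities n (triangle n a b c)"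
  then have e: "e \<in> triangle n a b c"
    and right_id: "\<And>\<alpha>. \<alpha> \<in> triangle n a b c \<Longrightarrow> emult n \<alpha> e = \<alpha>"
    by (auto simp: right_identities_def)
  have "e y = y" if "y \<in> {a, b, c}" for y
  proof -
    have "y < n" using that abc by auto
    with right_id[OF const_map_in_triangle[OF that]] have "emult n (const_map n y) e 0 = const_map n y 0"
      by simp
    with abc show ?thesis by (simp add: emult_def const_map_def)
  qed
  with e show "e \<in> profile_class n a b c {(a, b, c)}"
    by (simp add: profile_class_def profile_def)
next
  fix e
  assume "e \<in> profile_class n a b c {(a, b, c)}"
  then have e: "e \<in> triangle n a b c" and fixed: "e a = a" "e b = b" "e c = c"
    by (auto simp: profile_class_def profile_def)
  have "emult n \<alpha> e = \<alpha>" if \<alpha>: "\<alpha> \<in> triangle n a b c" for \<alpha>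
    using triangle_value[OF \<alpha>] triangle_outside[OF \<alpha>] fixed
    by (fastforce simp: emult_def)
  with e show "e \<in> right_identities n (triangle n a b c)"
    by (simp add: right_identities_def)
qed

end

theorem theorem40:
  fixes n a b c :: nat
  assumes "n \<ge> 3" and "a < b" and "b < c" and "c < n"
  defines "T \<equiv> triangle n a b c"
  defines "Na \<equiv> nilset n T a" and "Nb \<equiv> nilset n T b" and "Nc \<equiv> nilset n T c"
  defines "Lpar \<equiv> {\<alpha> \<in> T. \<alpha> a = a \<and> \<alpha> b = b \<and> \<alpha> c = b}"
  defines "Rpar \<equiv> {\<alpha> \<in> T. \<alpha> a = b \<and> \<alpha> b = b \<and> \<alpha> c = c}"
  defines "Ltri \<equiv> {\<alpha> \<in> T. \<alpha> a = a \<and> \<alpha> b = a \<and> \<alpha> c = c}"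
  defines "Rtri \<equiv> {\<alpha> \<in> T. \<alpha> a = a \<and> \<alpha> b = c \<and> \<alpha> c = c}"
  defines "RI \<equiv> right_identities n T"
  defines "Ss \<equiv> [Na, Nb, Nc, Lpar, Rpar, Ltri, Rtri, RI]"
  shows "(\<forall>S\<in>set Ss. S \<subseteq> T \<and> is_subsemiring n S)
         \<and> \<Union>(set Ss) = T
         \<and> (\<forall>i<length Ss. \<forall>j<length Ss. i \<noteq> j \<longrightarrow> Ss ! i \<inter> Ss ! j = {})"
proof -
  note abc = assms(2-4)
  define Ps where "Ps = [{(a, a, a), (a, a, b)}, {(b, b, b)}, {(b, c, c), (c, c, c)},
    {(a, b, b)}, {(b, b, c)}, {(a, a, c)}, {(a, c, c)}, {(a, b, c)}]"
  have "Na = profile_class n a b c {(a, a, a), (a, a, b)}"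
    "Nb = profile_class n a b c {(b, b, b)}" "Nc = profile_class n a b c {(b, c, c), (c, c, c)}"
    unfolding Na_def Nb_def Nc_def T_def using abc
    by (intro nilset_eq_profile_class[OF abc]; force simp: monotone_triples_eq[OF abc] triple_apply_def)+
  moreover have "Lpar = profile_class n a b c {(a, b, b)}" "Rpar = profile_class n a b c {(b, b, c)}"
    "Ltri = profile_class n a b c {(a, a, c)}" "Rtri = profile_class n a b c {(a, c, c)}"
    unfolding Lpar_def Rpar_def Ltri_def Rtri_def T_def by (auto simp: profile_class_def profile_def)
  moreover have "RI = profile_class n a b c {(a, b, c)}"
    unfolding RI_def T_def by (rule right_identities_eq_profile_class[OF abc])
  ultimately have Ss: "Ss = map (profile_class n a b c) Ps"
    unfolding Ss_def Ps_def by simp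
  have "\<forall>P\<in>set Ps. P \<subseteq> monotone_triples a b c \<and> P \<noteq> {}
          \<and> (\<forall>t\<in>P. \<forall>s\<in>P. triple_max t s \<in> P \<and> triple_comp a b t s \<in> P)"
    using abc unfolding Ps_def
    by (simp add: monotone_triples_def triple_max_def triple_comp_def triple_apply_def max_def)
  then have "\<forall>S\<in>set Ss. S \<subseteq> T \<and> is_subsemiring n S"
    unfolding Ss T_def using profile_class_subsemiring[OF abc]
    by (auto simp: profile_class_def)
  moreover have "\<Union>(set Ps) = monotone_triples a b c"
    unfolding Ps_def monotone_triples_eq[OF abc] by auto
  moreover have "\<forall>i<length Ps. \<forall>j<length Ps. i \<noteq> j \<longrightarrow> Ps ! i \<inter> Ps ! j = {}"
    using abc unfolding Ps_def by (simp add: numeral_eq_Suc All_less_Suc2)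
  ultimately show ?thesis
    using profile_classes_partition[OF abc] unfolding Ss T_def by simp
qed

end
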